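(* Let $G$ be a connected simple graph on $n\ge2$ vertices labeled so that $m_1+d_1\ge m_2+d_2\ge\cdots\ge m_n+d_n$, where $m_i=\frac{\sum_{j\sim i}d_j}{d_i}$. Let $\Delta$ be the maximum degree and $N=\max_{i\sim j}d_j/d_i$. Then for $1\le i\le n$, \[\rho(Q(G))\le \frac{m_i+d_i+\Delta-N+\sqrt{(m_i+d_i-\Delta+N)^2+4N\sum_{k=1}^{i-1}(m_k+d_k-m_i-d_i)}}{2}.\] Equality holds if and only if $m_1+d_1=\cdots=m_n+d_n$, or $i\ge2$ and $G$ is a bidegreed graph with $m_1+d_1>m_2+d_2=\cdots=m_n+d_n$ and $d_1=n-1>d_2=\cdots=d_n$.
   Context: $Q(G)=D(G)+A(G)$ is the signless Laplacian matrix ($A(G)$ adjacency matrix, $D(G)$ diagonal degree matrix), $d_i$ is the degree of $v_i$, $i\sim j$ means adjacency, $\rho$ is the spectral radius. A bidegreed graph has exactly two distinct vertex degrees. An empty sum equals $0$. *)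

theory Defs
  imports "Jordan_Normal_Form.Spectral_Radius"
begin

definition simple_graph :: "nat \<Rightarrow> (nat \<Rightarrow> nat \<Rightarrow> bool) \<Rightarrow> bool" where
  "simple_graph n E \<longleftrightarrow> (\<forall>i j. E i j \<longrightarrow> i < n \<and> j < n) \<and> (\<forall>i j. E i j \<longrightarrow> E j i) \<and> (\<forall>i. \<not> E i i)"

definition connected_graph :: "nat \<Rightarrow> (nat \<Rightarrow> nat \<Rightarrow> bool) \<Rightarrow> bool" where
  "connected_graph n E \<longleftrightarrow> (\<forall>i j. i < n \<longrightarrow> j < n \<longrightarrow> E\<^sup>*\<^sup>* i j)"

definition deg :: "nat \<Rightarrow> (nat \<Rightarrow> nat \<Rightarrow> bool) \<Rightarrow> nat \<Rightarrow> nat" where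
  "deg n E i = card {j. j < n \<and> E i j}"

definition avg_deg :: "nat \<Rightarrow> (nat \<Rightarrow> nat \<Rightarrow> bool) \<Rightarrow> nat \<Rightarrow> real" where
  "avg_deg n E i = (\<Sum>j\<in>{j. j < n \<and> E i j}. real (deg n E j)) / real (deg n E i)"

definition max_deg :: "nat \<Rightarrow> (nat \<Rightarrow> nat \<Rightarrow> bool) \<Rightarrow> nat" where
  "max_deg n E = Max (deg n E ` {0..<n})"

definition max_ratio :: "nat \<Rightarrow> (nat \<Rightarrow> nat \<Rightarrow> bool) \<Rightarrow> real" where
  "max_ratio n E = Max {real (deg n E j) / real (deg n E i) | i j. i < n \<and> j < n \<and> E i j}"

definition bidegreed :: "nat \<Rightarrow> (nat \<Rightarrow> nat \<Rightarrow> bool) \<Rightarrow> bool" where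
  "bidegreed n E \<longleftrightarrow> card (deg n E ` {0..<n}) = 2"

definition signless_laplacian :: "nat \<Rightarrow> (nat \<Rightarrow> nat \<Rightarrow> bool) \<Rightarrow> real mat" where
  "signless_laplacian n E = mat n n (\<lambda>(i, j). (if i = j then real (deg n E i) else 0) + (if E i j then 1 else 0))"

definition rho_Q :: "nat \<Rightarrow> (nat \<Rightarrow> nat \<Rightarrow> bool) \<Rightarrow> real" where
  "rho_Q n E = spectral_radius (map_mat complex_of_real (signless_laplacian n E))"

end

(* With t_k = m_k + d_k, compare Q with the positive vector w_p = d_p (1 + y_p), where
   y_p = (t_p - t_i) / g for p < i and y_p = 0 otherwise, g = s - \<Delta> + N, and s is the claimed
   bound. Since d_p m_p is the sum of the neighbours' degrees and s is a root of
   (x - t_i)(x - \<Delta> + N) = N \<Sum>_{k<i} (t_k - t_i), one gets s w_p - (Q w)_p = d_p slack_p with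
   slack_p a sum of four nonnegative terms. A Collatz--Wielandt argument on the connected graph
   gives \<rho>(Q) \<le> s, with equality iff every slack vanishes; this forces either all t_k to be
   equal, or vertex 0 to be adjacent to all others with every other vertex of one smaller degree. *)

theory Submission
  imports Defs
begin

definition neighbours :: "nat \<Rightarrow> (nat \<Rightarrow> nat \<Rightarrow> bool) \<Rightarrow> nat \<Rightarrow> nat set" where
  "neighbours n E p = {j. j < n \<and> E p j}"

lemma finite_neighbours [simp]: "finite (neighbours n E p)"
  unfolding neighbours_def by auto

lemma card_neighbours: "card (neighbours n E p) = deg n E p"
  unfolding deg_def neighbours_def ..

lemma neighbours_subset:
  "simple_graph n E \<Longrightarrow> neighbours n E p \<subseteq> {0..<n} - {p}"
  unfolding neighbours_def simple_graph_def by auto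

abbreviation complex_signless_laplacian :: "nat \<Rightarrow> (nat \<Rightarrow> nat \<Rightarrow> bool) \<Rightarrow> complex mat" where
  "complex_signless_laplacian n E \<equiv> map_mat complex_of_real (signless_laplacian n E)"

lemma complex_signless_laplacian_carrier:
  "complex_signless_laplacian n E \<in> carrier_mat n n"
  by (simp add: signless_laplacian_def)

lemma complex_signless_laplacian_mult_vec:
  assumes "simple_graph n E" and "v \<in> carrier_vec n" and "p < n"
  shows "(complex_signless_laplacian n E *\<^sub>v v) $ p
        = of_nat (deg n E p) * v $ p + (\<Sum>j\<in>neighbours n E p. v $ j)"
proof -
  have "(complex_signless_laplacian n E *\<^sub>v v) $ p
     = (\<Sum>j<n. (of_real (if p = j then real (deg n E p) else 0) + of_real (if E p j then 1 else 0)) * v $ j)"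
    using assms(2,3) by (simp add: signless_laplacian_def scalar_prod_def row_def lessThan_atLeast0)
  also have "\<dots> = (\<Sum>j<n. (if p = j then of_nat (deg n E p) * v $ j else 0)) + (\<Sum>j<n. (if E p j then v $ j else 0))"
    by (subst sum.distrib[symmetric], rule sum.cong, auto simp: distrib_right)
  also have "\<dots> = of_nat (deg n E p) * v $ p + (\<Sum>j\<in>neighbours n E p. v $ j)"
    using assms(3) by (simp add: sum.If_cases neighbours_def lessThan_def Int_def conj_commute)
  finally show ?thesis .
qed

lemma norm_eigenvalue_mult_le:
  assumes "simple_graph n E" and "v \<in> carrier_vec n"
    and "complex_signless_laplacian n E *\<^sub>v v = \<mu> \<cdot>\<^sub>v v" and "p < n"
  shows "cmod \<mu> * cmod (v $ p) \<le> deg n E p * cmod (v $ p) + (\<Sum>j\<in>neighbours n E p. cmod (v $ j))"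
proof -
  have "cmod \<mu> * cmod (v $ p) = cmod ((complex_signless_laplacian n E *\<^sub>v v) $ p)"
    using assms by (simp add: norm_mult)
  also have "\<dots> \<le> deg n E p * cmod (v $ p) + (\<Sum>j\<in>neighbours n E p. cmod (v $ j))"
    unfolding complex_signless_laplacian_mult_vec[OF assms(1,2,4)]
    by (rule order_trans[OF norm_triangle_ineq add_mono]) (auto simp: norm_mult norm_sum)
  finally show ?thesis .
qed

lemma norm_eigenvalue_le_at_dominant_vertex:
  fixes w :: "nat \<Rightarrow> real"
  assumes simple: "simple_graph n E" and v: "v \<in> carrier_vec n"
    and eigen: "complex_signless_laplacian n E *\<^sub>v v = \<mu> \<cdot>\<^sub>v v"
    and row: "\<And>q. q < n \<Longrightarrow> deg n E q * w q + (\<Sum>j\<in>neighbours n E q. w j) \<le> s * w q"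
    and dominated: "\<And>k. k < n \<Longrightarrow> cmod (v $ k) \<le> c * w k"
    and "c > 0" and p: "p < n" and "w p > 0" and attained: "cmod (v $ p) = c * w p"
  shows "cmod \<mu> \<le> s \<and> (cmod \<mu> = s \<longrightarrow> (\<forall>j\<in>neighbours n E p. cmod (v $ j) = c * w j)
           \<and> deg n E p * w p + (\<Sum>j\<in>neighbours n E p. w j) = s * w p)"
proof -
  define A where "A = (\<Sum>j\<in>neighbours n E p. cmod (v $ j))"
  define B where "B = (\<Sum>j\<in>neighbours n E p. c * w j)"
  define R where "R = deg n E p * w p + (\<Sum>j\<in>neighbours n E p. w j)"
  have in_range: "j < n" if "j \<in> neighbours n E p" for j
    using that unfolding neighbours_def by simp
  have eigen_row: "cmod \<mu> * (c * w p) \<le> deg n E p * (c * w p) + A"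
    using norm_eigenvalue_mult_le[OF simple v eigen p] unfolding A_def attained .
  have "A \<le> B"
    unfolding A_def B_def by (rule sum_mono) (simp add: dominated in_range)
  have B_R: "deg n E p * (c * w p) + B = c * R"
    unfolding B_def R_def by (simp add: sum_distrib_left algebra_simps)
  have "c * R \<le> c * (s * w p)"
    using row[OF p] \<open>c > 0\<close> unfolding R_def by simp
  have cw_pos: "c * w p > 0"
    using \<open>c > 0\<close> \<open>w p > 0\<close> by simp
  have "cmod \<mu> * (c * w p) \<le> s * (c * w p)"
    using eigen_row \<open>A \<le> B\<close> B_R \<open>c * R \<le> c * (s * w p)\<close> by (simp add: algebra_simps)
  then have "cmod \<mu> \<le> s"
    using cw_pos by (rule mult_right_le_imp_le)
  moreover have "(\<forall>j\<in>neighbours n E p. cmod (v $ j) = c * w j) \<and> R = s * w p"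
    if "cmod \<mu> = s"
  proof
    have "c * (s * w p) \<le> deg n E p * (c * w p) + A"
      using eigen_row that by (simp add: mult.left_commute)
    then have "A = B" and "c * R = c * (s * w p)"
      using \<open>A \<le> B\<close> B_R \<open>c * R \<le> c * (s * w p)\<close> by linarith+
    from \<open>A = B\<close> have "(\<Sum>j\<in>neighbours n E p. c * w j - cmod (v $ j)) = 0"
      unfolding A_def B_def by (simp add: sum_subtractf)
    then show "\<forall>j\<in>neighbours n E p. cmod (v $ j) = c * w j"
      by (subst (asm) sum_nonneg_eq_0_iff) (auto simp: dominated in_range)
    show "R = s * w p"
      using \<open>c * R = c * (s * w p)\<close> \<open>c > 0\<close> by simp
  qed
  ultimately show ?thesis
    unfolding R_def by blast
qed

lemma dominating_scale_exists:
  fixes v :: "complex vec" and w :: "nat \<Rightarrow> real"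
  assumes "v \<in> carrier_vec n" and "v \<noteq> 0\<^sub>v n" and w_pos: "\<And>p. p < n \<Longrightarrow> w p > 0"
  shows "\<exists>c>0. (\<forall>k<n. cmod (v $ k) \<le> c * w k) \<and> (\<exists>p<n. cmod (v $ p) = c * w p)"
proof -
  obtain k0 where k0: "k0 < n" "v $ k0 \<noteq> 0"
    using assms(1,2) by (metis carrier_vecD eq_vecI index_zero_vec(1,2))
  define ratios where "ratios = (\<lambda>k. cmod (v $ k) / w k) ` {0..<n}"
  define c where "c = Max ratios"
  have fin: "finite ratios" and ne: "ratios \<noteq> {}"
    unfolding ratios_def using k0 by auto
  have dominated: "cmod (v $ k) \<le> c * w k" if "k < n" for k
  proof -
    have "cmod (v $ k) / w k \<le> c"
      unfolding c_def ratios_def using that fin by (intro Max_ge) auto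
    then show ?thesis
      using w_pos[OF that] by (simp add: divide_le_eq mult.commute)
  qed
  obtain p0 where "p0 < n" and "c = cmod (v $ p0) / w p0"
    using Max_in[OF fin ne] unfolding c_def ratios_def by auto
  then have "cmod (v $ p0) = c * w p0"
    using w_pos[OF \<open>p0 < n\<close>] by simp
  moreover have "c > 0"
  proof -
    have "0 < cmod (v $ k0) / w k0"
      using k0 w_pos[OF k0(1)] by simp
    also have "\<dots> \<le> c"
      unfolding c_def ratios_def using k0 fin by (intro Max_ge) auto
    finally show ?thesis .
  qed
  ultimately show ?thesis
    using dominated \<open>p0 < n\<close> by blast
qed

text \<open>A Collatz--Wielandt argument: comparing an eigenvector with the positive weight \<open>w\<close> at a
  vertex where their ratio is maximal bounds the eigenvalue; if the bound is attained, the ratio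
  is maximal at the neighbours too, hence by connectivity at every vertex.\<close>
lemma norm_eigenvalue_le_row_bound:
  fixes w :: "nat \<Rightarrow> real"
  assumes simple: "simple_graph n E" and connected: "connected_graph n E"
    and w_pos: "\<And>p. p < n \<Longrightarrow> w p > 0"
    and row: "\<And>p. p < n \<Longrightarrow> deg n E p * w p + (\<Sum>j\<in>neighbours n E p. w j) \<le> s * w p"
    and "eigenvalue (complex_signless_laplacian n E) \<mu>"
  shows "cmod \<mu> \<le> s \<and> (cmod \<mu> = s \<longrightarrow>
           (\<forall>p<n. deg n E p * w p + (\<Sum>j\<in>neighbours n E p. w j) = s * w p))"
proof -
  obtain v where v: "v \<in> carrier_vec n" "v \<noteq> 0\<^sub>v n"
    and eigen: "complex_signless_laplacian n E *\<^sub>v v = \<mu> \<cdot>\<^sub>v v"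
    using assms(5) unfolding eigenvalue_def eigenvector_def by (auto simp: signless_laplacian_def)
  obtain c p0 where "c > 0" and dominated: "\<And>k. k < n \<Longrightarrow> cmod (v $ k) \<le> c * w k"
    and p0: "p0 < n" "cmod (v $ p0) = c * w p0"
    using dominating_scale_exists[where w = w, OF v(1,2) w_pos] by blast
  define P where "P = {p. p < n \<and> cmod (v $ p) = c * w p}"
  have p0_P: "p0 \<in> P"
    unfolding P_def using p0 by simp
  note at_P = norm_eigenvalue_le_at_dominant_vertex[OF simple v(1) eigen row dominated \<open>c > 0\<close>]
  have "cmod \<mu> \<le> s"
    using at_P p0_P w_pos unfolding P_def by blast
  moreover have "deg n E q * w q + (\<Sum>j\<in>neighbours n E q. w j) = s * w q"
    if "cmod \<mu> = s" and q: "q < n" for q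
  proof -
    have "E\<^sup>*\<^sup>* p0 q"
      using connected p0(1) q unfolding connected_graph_def by blast
    then have "q \<in> P"
    proof (induction rule: rtranclp_induct)
      case base
      show ?case by (rule p0_P)
    next
      case (step y z)
      then have "z \<in> neighbours n E y"
        using simple unfolding simple_graph_def neighbours_def by blast
      then show ?case
        using at_P step.IH w_pos \<open>cmod \<mu> = s\<close> unfolding P_def neighbours_def by auto
    qed
    then show ?thesis
      using at_P w_pos \<open>cmod \<mu> = s\<close> unfolding P_def by blast
  qed
  ultimately show ?thesis
    by blast
qed

lemma le_rho_Q_of_positive_eigenvector:
  fixes w :: "nat \<Rightarrow> real"
  assumes simple: "simple_graph n E" and "n > 0" and w_pos: "\<And>p. p < n \<Longrightarrow> w p > 0"
    and row: "\<And>p. p < n \<Longrightarrow> deg n E p * w p + (\<Sum>j\<in>neighbours n E p. w j) = s * w p"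
  shows "s \<le> rho_Q n E"
proof -
  define v where "v = vec n (\<lambda>k. complex_of_real (w k))"
  have v: "v \<in> carrier_vec n"
    unfolding v_def by simp
  have "v \<noteq> 0\<^sub>v n"
    using w_pos[OF \<open>n > 0\<close>] \<open>n > 0\<close> by (auto simp: v_def dest!: arg_cong[where f = "\<lambda>x. x $ 0"])
  moreover have "complex_signless_laplacian n E *\<^sub>v v = complex_of_real s \<cdot>\<^sub>v v"
  proof (rule eq_vecI)
    fix p assume "p < dim_vec (complex_of_real s \<cdot>\<^sub>v v)"
    then have p: "p < n"
      using v by simp
    have "(complex_signless_laplacian n E *\<^sub>v v) $ p
        = complex_of_real (deg n E p * w p + (\<Sum>j\<in>neighbours n E p. w j))"
      unfolding complex_signless_laplacian_mult_vec[OF simple v p] using p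
      by (simp add: v_def neighbours_def)
    then show "(complex_signless_laplacian n E *\<^sub>v v) $ p = (complex_of_real s \<cdot>\<^sub>v v) $ p"
      using p by (simp add: row v_def)
  qed (use v in \<open>simp add: signless_laplacian_def\<close>)
  ultimately have "complex_of_real s \<in> spectrum (complex_signless_laplacian n E)"
    using v unfolding spectrum_def eigenvalue_def eigenvector_def
    by (auto simp: signless_laplacian_def)
  then show ?thesis
    using spectral_radius_mem_max(2)[OF complex_signless_laplacian_carrier \<open>n > 0\<close>]
    unfolding rho_Q_def by fastforce
qed

lemma rho_Q_le_row_bound:
  fixes w :: "nat \<Rightarrow> real"
  assumes "simple_graph n E" and "connected_graph n E" and "n > 0"
    and w_pos: "\<And>p. p < n \<Longrightarrow> w p > 0"
    and "\<And>p. p < n \<Longrightarrow> deg n E p * w p + (\<Sum>j\<in>neighbours n E p. w j) \<le> s * w p"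
  shows "rho_Q n E \<le> s \<and> (rho_Q n E = s \<longleftrightarrow>
           (\<forall>p<n. deg n E p * w p + (\<Sum>j\<in>neighbours n E p. w j) = s * w p))"
proof -
  obtain \<mu> where "eigenvalue (complex_signless_laplacian n E) \<mu>" and "rho_Q n E = cmod \<mu>"
    using spectral_radius_mem_max(1)[OF complex_signless_laplacian_carrier \<open>n > 0\<close>]
    unfolding rho_Q_def spectrum_def by auto
  then show ?thesis
    using norm_eigenvalue_le_row_bound[OF assms(1,2) w_pos assms(5)]
      le_rho_Q_of_positive_eigenvector[OF assms(1,3) w_pos] by force
qed

locale connected_simple_graph =
  fixes n :: nat and E :: "nat \<Rightarrow> nat \<Rightarrow> bool"
  assumes two_le_n: "2 \<le> n" and simple: "simple_graph n E" and connected: "connected_graph n E"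
begin

abbreviation d :: "nat \<Rightarrow> real" where
  "d k \<equiv> real (deg n E k)"

abbreviation m :: "nat \<Rightarrow> real" where
  "m \<equiv> avg_deg n E"

abbreviation t :: "nat \<Rightarrow> real" where
  "t k \<equiv> m k + d k"

abbreviation \<Delta> :: real where
  "\<Delta> \<equiv> real (max_deg n E)"

abbreviation N :: real where
  "N \<equiv> max_ratio n E"

lemma edge_in_range: "E p j \<Longrightarrow> p < n \<and> j < n"
  using simple unfolding simple_graph_def by blast

lemma edge_sym: "E p j \<Longrightarrow> E j p"
  using simple unfolding simple_graph_def by blast

lemma no_loop: "\<not> E p p"
  using simple unfolding simple_graph_def by blast

lemma neighbours_iff: "j \<in> neighbours n E p \<longleftrightarrow> E p j"
  using edge_in_range unfolding neighbours_def by blast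

lemma connected_by_edges: "p < n \<Longrightarrow> q < n \<Longrightarrow> E\<^sup>*\<^sup>* p q"
  using connected unfolding connected_graph_def by blast

lemma constant_if_constant_on_edges:
  assumes "\<And>p j. E p j \<Longrightarrow> f j = f p" and "k < n"
  shows "f k = f 0"
proof -
  have "E\<^sup>*\<^sup>* 0 k"
    using connected_by_edges two_le_n \<open>k < n\<close> by simp
  then show ?thesis
  proof (induction rule: rtranclp_induct)
    case (step y z)
    then show ?case
      using assms(1)[OF step(2)] by simp
  qed simp
qed

lemma deg_pos: "p < n \<Longrightarrow> d p > 0"
proof -
  assume "p < n"
  define q where "q = (if p = 0 then 1 else 0 :: nat)"
  have "q < n" "q \<noteq> p"
    unfolding q_def using two_le_n \<open>p < n\<close> by auto
  then have "E\<^sup>*\<^sup>* p q"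
    using connected_by_edges[OF \<open>p < n\<close>] by blast
  then obtain r where "E p r"
    using \<open>q \<noteq> p\<close> by (metis converse_rtranclpE)
  then have "neighbours n E p \<noteq> {}"
    by (auto simp: neighbours_iff)
  then show "d p > 0"
    by (simp add: card_neighbours[symmetric] card_gt_0_iff)
qed

lemma deg_le_n_minus_1: "p < n \<Longrightarrow> d p \<le> real n - 1"
proof -
  assume "p < n"
  have "card (neighbours n E p) \<le> card ({0..<n} - {p})"
    by (rule card_mono[OF _ neighbours_subset[OF simple]]) auto
  then show ?thesis
    using \<open>p < n\<close> by (simp add: card_neighbours of_nat_diff)
qed

lemma deg_eq_n_minus_1_iff:
  assumes "q < n"
  shows "d q = real n - 1 \<longleftrightarrow> (\<forall>p<n. p \<noteq> q \<longrightarrow> E q p)"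
proof -
  have "real n - 1 = real (card ({0..<n} - {q}))"
    using assms by (simp add: of_nat_diff)
  then have "d q = real n - 1 \<longleftrightarrow> card (neighbours n E q) = card ({0..<n} - {q})"
    by (simp add: card_neighbours)
  also have "\<dots> \<longleftrightarrow> neighbours n E q = {0..<n} - {q}"
  proof
    assume "card (neighbours n E q) = card ({0..<n} - {q})"
    then show "neighbours n E q = {0..<n} - {q}"
      by (intro card_subset_eq neighbours_subset[OF simple]) simp_all
  qed simp
  also have "\<dots> \<longleftrightarrow> (\<forall>p<n. p \<noteq> q \<longrightarrow> E q p)"
    unfolding neighbours_def using no_loop[of q] by (auto simp: set_eq_iff)
  finally show ?thesis .
qed

lemma deg_le_max_deg: "p < n \<Longrightarrow> d p \<le> \<Delta>"
  unfolding max_deg_def by simp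

lemma max_deg_attained: "\<exists>p<n. \<Delta> = d p"
proof -
  have "max_deg n E \<in> deg n E ` {0..<n}"
    unfolding max_deg_def using two_le_n by (intro Max_in) auto
  then show ?thesis
    by auto
qed

lemma finite_ratios: "finite {d j / d p | p j. p < n \<and> j < n \<and> E p j}"
proof -
  have "{d j / d p | p j. p < n \<and> j < n \<and> E p j} \<subseteq> (\<lambda>(p, j). d j / d p) ` ({0..<n} \<times> {0..<n})"
    by auto
  then show ?thesis
    by (rule finite_subset) auto
qed

lemma ratio_le_max_ratio: "E p j \<Longrightarrow> d j / d p \<le> N"
  unfolding max_ratio_def using edge_in_range by (intro Max_ge[OF finite_ratios]) blast

lemma max_ratio_attained: "\<exists>p j. E p j \<and> N = d j / d p"
proof -
  obtain j where "E 0 j"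
    using deg_pos[of 0] two_le_n by (auto simp: card_neighbours[symmetric] card_gt_0_iff neighbours_iff)
  then have "{d j / d p | p j. p < n \<and> j < n \<and> E p j} \<noteq> {}"
    using edge_in_range by blast
  from Max_in[OF finite_ratios this] show ?thesis
    unfolding max_ratio_def by blast
qed

lemma max_ratio_pos: "N > 0"
  using max_ratio_attained deg_pos edge_in_range by force

lemma deg_mult_avg_deg: "p < n \<Longrightarrow> d p * m p = (\<Sum>j\<in>neighbours n E p. d j)"
  using deg_pos[of p] unfolding avg_deg_def neighbours_def by simp

lemma avg_deg_nonneg: "m p \<ge> 0"
  unfolding avg_deg_def by (intro divide_nonneg_nonneg sum_nonneg) auto

lemma bidegreed_if_one_vertex_differs:
  assumes "d 1 \<noteq> d 0" and "\<And>k. 1 \<le> k \<Longrightarrow> k < n \<Longrightarrow> d k = d 1"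
  shows "bidegreed n E"
proof -
  have "deg n E ` {0..<n} = {deg n E 0, deg n E 1}"
  proof
    show "deg n E ` {0..<n} \<subseteq> {deg n E 0, deg n E 1}"
    proof
      fix x assume "x \<in> deg n E ` {0..<n}"
      then obtain k where "k < n" and "x = deg n E k"
        by auto
      then show "x \<in> {deg n E 0, deg n E 1}"
        using assms(2)[of k] by (cases "k = 0") simp_all
    qed
    show "{deg n E 0, deg n E 1} \<subseteq> deg n E ` {0..<n}"
      using two_le_n by auto
  qed
  then show ?thesis
    unfolding bidegreed_def using assms(1) by simp
qed

lemma t_constant_if_max_ratio_le_1:
  assumes "N \<le> 1" and "k < n"
  shows "t k = t 0"
proof -
  have ratio_le_1: "d j \<le> d p" if "E p j" for p j
  proof -
    have "d j / d p \<le> 1"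
      using ratio_le_max_ratio[OF that] assms(1) by simp
    then show ?thesis
      using deg_pos edge_in_range[OF that] by (simp add: divide_le_eq)
  qed
  have "d j = d p" if "E p j" for p j
    using ratio_le_1[OF that] ratio_le_1[OF edge_sym[OF that]] by (rule antisym)
  then have d_const: "d k = d 0" if "k < n" for k
    using constant_if_constant_on_edges[of d, OF _ that] by blast
  have m_const: "m k = d 0" if "k < n" for k
  proof -
    have "d k * m k = (\<Sum>j\<in>neighbours n E k. d 0)"
      unfolding deg_mult_avg_deg[OF that]
      by (rule sum.cong[OF refl d_const]) (simp add: neighbours_def)
    also have "\<dots> = d k * d 0"
      by (simp add: card_neighbours)
    finally show ?thesis
      using deg_pos[OF that] by simp
  qed
  have "0 < n"
    using two_le_n by simp
  then show ?thesis
    using d_const[OF assms(2)] m_const[OF assms(2)] m_const[of 0] by simp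
qed

end

locale ordered_connected_graph = connected_simple_graph +
  fixes i :: nat
  assumes t_antimono: "k \<le> l \<Longrightarrow> l < n \<Longrightarrow> t l \<le> t k"
    and i_lt_n: "i < n"
begin

definition S :: real where
  "S = (\<Sum>k<i. m k + d k - m i - d i)"

text \<open>The larger root of \<open>(x - t i) * (x - \<Delta> + N) = N * S\<close>.\<close>
definition s :: real where
  "s = (m i + d i + \<Delta> - N + sqrt ((m i + d i - \<Delta> + N)\<^sup>2 + 4 * N * S)) / 2"

definition g :: real where
  "g = s - \<Delta> + N"

definition y :: "nat \<Rightarrow> real" where
  "y k = (if k < i then (t k - t i) / g else 0)"

definition e :: "nat \<Rightarrow> real" where
  "e k = (if k < i then 0 else t k - t i)"

lemma S_eq: "S = (\<Sum>k<i. t k - t i)"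
  unfolding S_def by (simp add: diff_diff_eq)

lemma t_i_le: "k \<le> i \<Longrightarrow> t i \<le> t k"
  using t_antimono i_lt_n by blast

lemma S_nonneg: "S \<ge> 0"
  unfolding S_eq by (rule sum_nonneg) (simp add: t_i_le)

lemma max_deg_le_t0: "\<Delta> \<le> t 0"
proof -
  obtain p where "p < n" and "\<Delta> = d p"
    using max_deg_attained by blast
  then have "\<Delta> \<le> t p"
    using avg_deg_nonneg[of p] by simp
  also have "\<dots> \<le> t 0"
    using t_antimono \<open>p < n\<close> by blast
  finally show ?thesis .
qed

lemma g_pos_and_root: "g > 0 \<and> (s - t i) * g = N * S"
proof -
  define a where "a = t i - \<Delta> + N"
  define r where "r = sqrt (a\<^sup>2 + 4 * N * S)"
  have r2: "r\<^sup>2 = a\<^sup>2 + 4 * N * S" and "r \<ge> 0"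
    unfolding r_def using S_nonneg max_ratio_pos by simp_all
  have s_r: "s = (t i + \<Delta> - N + r) / 2" and g_r: "g = (a + r) / 2"
    unfolding g_def s_def r_def a_def by (simp_all add: field_simps)
  have "\<bar>a\<bar> \<le> r"
    unfolding r_def using S_nonneg max_ratio_pos by (simp add: real_le_rsqrt)
  have "g > 0"
  proof (cases "S = 0")
    case True
    then have "\<forall>k<i. t k - t i = 0"
      unfolding S_eq by (subst (asm) sum_nonneg_eq_0_iff) (auto simp: t_i_le)
    then have "t i = t 0"
      by (cases "i = 0") auto
    then have "a > 0"
      unfolding a_def using max_deg_le_t0 max_ratio_pos by simp
    then show ?thesis
      unfolding g_r using \<open>\<bar>a\<bar> \<le> r\<close> by simp
  next
    case False
    then have "\<bar>a\<bar>\<^sup>2 < r\<^sup>2"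
      unfolding r2 using S_nonneg max_ratio_pos by simp
    then have "\<bar>a\<bar> < r"
      using \<open>r \<ge> 0\<close> by (rule power2_less_imp_less)
    then show ?thesis
      unfolding g_r by simp
  qed
  moreover have "(s - t i) * g = (r\<^sup>2 - a\<^sup>2) / 4"
    unfolding g_r s_r a_def by (simp add: field_simps power2_eq_square)
  ultimately show ?thesis
    unfolding r2 by simp
qed

lemma g_pos: "g > 0"
  using g_pos_and_root by blast

lemma y_nonneg: "y k \<ge> 0"
  unfolding y_def using t_i_le[of k] g_pos by simp

lemma e_nonpos: "p < n \<Longrightarrow> e p \<le> 0"
  unfolding e_def using t_antimono[of i p] by simp

lemma t_decomposition: "t p = t i + g * y p + e p"
  unfolding y_def e_def using g_pos by simp

lemma s_minus_t_i: "s - t i = N * (\<Sum>j<n. y j)"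
proof -
  have "{..<n} \<inter> {j. j < i} = {..<i}"
    using i_lt_n by auto
  then have "(\<Sum>j<n. y j) = (\<Sum>j<i. (t j - t i) / g)"
    unfolding y_def by (simp add: sum.If_cases)
  also have "\<dots> = S / g"
    unfolding S_eq by (simp add: sum_divide_distrib)
  finally have "(\<Sum>j<n. y j) = S / g" .
  moreover have "s - t i = N * S / g"
    using g_pos_and_root by (simp add: eq_divide_eq)
  ultimately show ?thesis
    by simp
qed

definition w :: "nat \<Rightarrow> real" where
  "w k = d k * (1 + y k)"

definition non_neighbours :: "nat \<Rightarrow> nat set" where
  "non_neighbours p = {j. j < n \<and> j \<noteq> p \<and> \<not> E p j}"

definition slack :: "nat \<Rightarrow> real" where
  "slack p = (\<Delta> - d p) * y p - e p + N * (\<Sum>j\<in>non_neighbours p. y j)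
     + (\<Sum>j\<in>neighbours n E p. (N - d j / d p) * y j)"

lemma finite_non_neighbours [simp]: "finite (non_neighbours p)"
  unfolding non_neighbours_def by simp

lemma sum_y_split:
  assumes "p < n"
  shows "(\<Sum>j<n. y j) = y p + (\<Sum>j\<in>non_neighbours p. y j) + (\<Sum>j\<in>neighbours n E p. y j)"
proof -
  have "{..<n} = insert p (non_neighbours p \<union> neighbours n E p)"
    using assms no_loop[of p] unfolding non_neighbours_def neighbours_def by auto
  moreover have "p \<notin> non_neighbours p \<union> neighbours n E p"
    using no_loop[of p] unfolding non_neighbours_def neighbours_def by auto
  moreover have "non_neighbours p \<inter> neighbours n E p = {}"
    unfolding non_neighbours_def neighbours_def by auto
  ultimately show ?thesis
    by (simp add: sum.union_disjoint)
qed

lemma row_identity: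
  assumes p: "p < n"
  shows "s * w p - (d p * w p + (\<Sum>j\<in>neighbours n E p. w j)) = d p * slack p"
proof -
  define Z where "Z = (\<Sum>j\<in>neighbours n E p. d j / d p * y j)"
  have "(\<Sum>j\<in>neighbours n E p. w j) = (\<Sum>j\<in>neighbours n E p. d j) + (\<Sum>j\<in>neighbours n E p. d j * y j)"
    unfolding w_def by (simp add: sum.distrib algebra_simps)
  also have "\<dots> = d p * m p + d p * Z"
    using deg_pos[OF p] unfolding deg_mult_avg_deg[OF p] Z_def by (simp add: sum_distrib_left)
  finally have sum_w: "(\<Sum>j\<in>neighbours n E p. w j) = d p * m p + d p * Z" .
  have slack_Z: "slack p = (\<Delta> - d p) * y p - e p + N * (\<Sum>j\<in>non_neighbours p. y j)
      + N * (\<Sum>j\<in>neighbours n E p. y j) - Z"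
    unfolding slack_def Z_def by (simp add: sum_subtractf sum_distrib_left algebra_simps)
  have slack_eq: "slack p = s * (1 + y p) - d p * (1 + y p) - m p - Z"
    using s_minus_t_i sum_y_split[OF p] t_decomposition[of p]
    unfolding slack_Z g_def by (simp add: algebra_simps)
  show ?thesis
    unfolding sum_w slack_eq unfolding w_def by (simp add: algebra_simps)
qed

lemma neighbour_slack_term_nonneg: "E p j \<Longrightarrow> (N - d j / d p) * y j \<ge> 0"
  using ratio_le_max_ratio[of p j] y_nonneg[of j] by simp

lemma slack_eq_0_iff:
  "slack p = 0 \<longleftrightarrow> (\<Delta> - d p) * y p = 0 \<and> e p = 0 \<and> (\<forall>j\<in>non_neighbours p. y j = 0)
     \<and> (\<forall>j\<in>neighbours n E p. (N - d j / d p) * y j = 0)"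
  and slack_nonneg: "slack p \<ge> 0"
  if "p < n"
proof -
  have terms_nonneg: "(\<Delta> - d p) * y p \<ge> 0" "- e p \<ge> 0"
      "(\<Sum>j\<in>non_neighbours p. y j) \<ge> 0" "(\<Sum>j\<in>neighbours n E p. (N - d j / d p) * y j) \<ge> 0"
    using deg_le_max_deg[OF that] y_nonneg e_nonpos[OF that]
    by (auto intro!: sum_nonneg neighbour_slack_term_nonneg simp: neighbours_iff)
  have "(\<Sum>j\<in>non_neighbours p. y j) = 0 \<longleftrightarrow> (\<forall>j\<in>non_neighbours p. y j = 0)"
    using y_nonneg by (simp add: sum_nonneg_eq_0_iff)
  moreover have "(\<Sum>j\<in>neighbours n E p. (N - d j / d p) * y j) = 0
      \<longleftrightarrow> (\<forall>j\<in>neighbours n E p. (N - d j / d p) * y j = 0)"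
    by (rule sum_nonneg_eq_0_iff) (simp_all add: neighbour_slack_term_nonneg neighbours_iff)
  moreover have "N * (\<Sum>j\<in>non_neighbours p. y j) = 0 \<longleftrightarrow> (\<Sum>j\<in>non_neighbours p. y j) = 0"
    using max_ratio_pos by simp
  moreover have "N * (\<Sum>j\<in>non_neighbours p. y j) \<ge> 0"
    using max_ratio_pos terms_nonneg(3) by simp
  ultimately show "slack p = 0 \<longleftrightarrow> (\<Delta> - d p) * y p = 0 \<and> e p = 0 \<and> (\<forall>j\<in>non_neighbours p. y j = 0)
     \<and> (\<forall>j\<in>neighbours n E p. (N - d j / d p) * y j = 0)"
    and "slack p \<ge> 0"
    using terms_nonneg unfolding slack_def by linarith+
qed

lemma rho_Q_le_s_and_eq_iff: "rho_Q n E \<le> s \<and> (rho_Q n E = s \<longleftrightarrow> (\<forall>p<n. slack p = 0))"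
proof -
  have w_pos: "w p > 0" if "p < n" for p
    unfolding w_def using deg_pos[OF that] y_nonneg[of p] by (simp add: add_pos_nonneg)
  have tight_iff: "d p * w p + (\<Sum>j\<in>neighbours n E p. w j) = s * w p \<longleftrightarrow> slack p = 0"
    and row_le: "d p * w p + (\<Sum>j\<in>neighbours n E p. w j) \<le> s * w p" if "p < n" for p
    using row_identity[OF that] deg_pos[OF that] slack_nonneg[OF that]
    by (auto simp: algebra_simps mult_nonneg_nonneg)
  show ?thesis
    using rho_Q_le_row_bound[OF simple connected _ w_pos row_le] two_le_n tight_iff by simp
qed

context
  assumes tight: "\<forall>p<n. slack p = 0"
begin

lemma tight_e: "p < n \<Longrightarrow> e p = 0"
  using tight slack_eq_0_iff by blast

lemma tight_positive_weight_is_neighbour: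
  assumes "p < n" and "j < n" and "p \<noteq> j" and "y j \<noteq> 0"
  shows "E p j \<and> N = d j / d p"
proof -
  have "j \<notin> non_neighbours p"
    using tight slack_eq_0_iff[OF assms(1)] assms by blast
  then have "E p j"
    using assms unfolding non_neighbours_def by blast
  moreover have "(N - d j / d p) * y j = 0"
    using tight slack_eq_0_iff[OF assms(1)] assms(1) \<open>E p j\<close> neighbours_iff by blast
  ultimately show ?thesis
    using assms(4) by simp
qed

lemma tight_regular_case:
  assumes "y 0 = 0" and "k < n"
  shows "t k = t 0"
proof -
  have "t 0 = t i"
    using t_decomposition[of 0] tight_e two_le_n assms(1) by simp
  moreover have "t k \<le> t 0"
    using t_antimono assms(2) by blast
  moreover have "t i \<le> t k" if "k < i"
    using t_i_le that by simp
  moreover have "t k = t i" if "\<not> k < i"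
    using tight_e[OF assms(2)] that unfolding e_def by simp
  ultimately show ?thesis
    by force
qed

text \<open>A positive weight at a second vertex \<open>q\<close> would make \<open>0\<close> and \<open>q\<close> realise \<open>N\<close> in both
  directions, forcing \<open>N = 1\<close>.\<close>
lemma tight_leaf_weight_zero:
  assumes "y 0 \<noteq> 0" and "1 < N" and "1 \<le> q" and "q < n"
  shows "y q = 0"
proof (rule ccontr)
  assume "y q \<noteq> 0"
  have "0 < n"
    using assms(4) by simp
  have "N = d q / d 0"
    using tight_positive_weight_is_neighbour[OF \<open>0 < n\<close> assms(4) _ \<open>y q \<noteq> 0\<close>] assms(3) by simp
  moreover have "N = d 0 / d q"
    using tight_positive_weight_is_neighbour[OF assms(4) \<open>0 < n\<close> _ assms(1)] assms(3) by simp
  ultimately have "N * N = d q / d 0 * (d 0 / d q)"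
    by (intro arg_cong2[where f = "(*)"]) simp_all
  also have "\<dots> = 1"
    using deg_pos[OF \<open>0 < n\<close>] deg_pos[OF assms(4)] by simp
  finally have "N * N = 1" .
  moreover have "1 < N * N"
    using assms(2) assms(2) by (rule less_1_mult)
  ultimately show False
    by simp
qed

lemma tight_star_case:
  assumes "y 0 \<noteq> 0"
  shows "1 \<le> i \<and> bidegreed n E \<and> t 1 < t 0 \<and> (\<forall>k. 1 \<le> k \<and> k < n \<longrightarrow> t k = t 1)
    \<and> d 0 = real n - 1 \<and> d 1 < d 0 \<and> (\<forall>k. 1 \<le> k \<and> k < n \<longrightarrow> d k = d 1)"
proof -
  have n_pos: "0 < n" "1 < n"
    using two_le_n by simp_all
  have "0 < i" and t_i_lt_t_0: "t i < t 0"
    using assms y_nonneg[of 0] g_pos t_i_le[of 0] unfolding y_def by (auto split: if_splits)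
  have "1 < N"
  proof (rule ccontr)
    assume "\<not> 1 < N"
    then have "t i = t 0"
      using t_constant_if_max_ratio_le_1[OF _ i_lt_n] by simp
    then show False
      using t_i_lt_t_0 by simp
  qed
  have star_edge: "E p 0 \<and> N = d 0 / d p" if "1 \<le> p" "p < n" for p
    using tight_positive_weight_is_neighbour[OF that(2) n_pos(1) _ assms] that by simp
  have y_leaf: "y q = 0" if "1 \<le> q" "q < n" for q
    using tight_leaf_weight_zero[OF assms \<open>1 < N\<close> that] .
  have leaf_deg: "d p = d 0 / N" if "1 \<le> p" "p < n" for p
    using star_edge[OF that] deg_pos[OF that(2)] max_ratio_pos by (simp add: field_simps)
  have leaf_deg_eq: "d k = d 1" if "1 \<le> k" "k < n" for k
    using leaf_deg[OF that] leaf_deg[of 1] n_pos by simp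
  have "d 1 < d 0"
    using leaf_deg[of 1] n_pos \<open>1 < N\<close> deg_pos[OF n_pos(1)] by (simp add: divide_less_eq)
  have "d 0 = real n - 1"
    unfolding deg_eq_n_minus_1_iff[OF n_pos(1)]
  proof (intro allI impI)
    fix p assume "p < n" and "p \<noteq> 0"
    then have "E p 0"
      using star_edge[of p] by simp
    then show "E 0 p"
      by (rule edge_sym)
  qed
  have t_leaf: "t k = t i" if "1 \<le> k" "k < n" for k
    using t_decomposition[of k] y_leaf[OF that] tight_e[OF that(2)] by simp
  have "bidegreed n E"
    using bidegreed_if_one_vertex_differs[OF _ leaf_deg_eq] \<open>d 1 < d 0\<close> by simp
  moreover have "\<forall>k. 1 \<le> k \<and> k < n \<longrightarrow> t k = t 1"
  proof (intro allI impI)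
    fix k assume "1 \<le> k \<and> k < n"
    then show "t k = t 1"
      using t_leaf[of k] t_leaf[of 1] n_pos by simp
  qed
  moreover have "t 1 < t 0"
    using t_leaf[of 1] n_pos t_i_lt_t_0 by simp
  moreover have "\<forall>k. 1 \<le> k \<and> k < n \<longrightarrow> d k = d 1"
    using leaf_deg_eq by blast
  moreover have "1 \<le> i"
    using \<open>0 < i\<close> by simp
  ultimately show ?thesis
    using \<open>d 1 < d 0\<close> \<open>d 0 = real n - 1\<close> by blast
qed

end

lemma regular_imp_tight:
  assumes regular: "\<forall>k<n. t k = t 0"
  shows "\<forall>p<n. slack p = 0"
proof -
  have t_eq: "t k = t i" if "k < n" for k
    using regular[rule_format, OF that] regular[rule_format, OF i_lt_n] by simp
  have "y k = 0" for k
    unfolding y_def using t_eq[of k] i_lt_n by simp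
  moreover have "e p = 0" if "p < n" for p
    unfolding e_def using t_eq[OF that] by simp
  ultimately show ?thesis
    unfolding slack_def by simp
qed

lemma star_imp_tight:
  assumes "1 \<le> i" and t_leaf: "\<forall>k. 1 \<le> k \<and> k < n \<longrightarrow> t k = t 1"
    and "d 0 = real n - 1" and "d 1 < d 0" and d_leaf: "\<forall>k. 1 \<le> k \<and> k < n \<longrightarrow> d k = d 1"
  shows "\<forall>p<n. slack p = 0"
proof -
  have n_pos: "0 < n" "1 < n"
    using two_le_n by simp_all
  have t_eq: "t k = t i" if "1 \<le> k" "k < n" for k
    using t_leaf[rule_format, of k] t_leaf[rule_format, of i] that assms(1) i_lt_n by simp
  have y_leaf: "y k = 0" if "k \<noteq> 0" for k
    unfolding y_def using t_eq[of k] that i_lt_n by simp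
  have e_zero: "e p = 0" if "p < n" for p
    unfolding e_def using t_eq[of p] that assms(1) by simp
  have centre_edge: "E p 0" if "p \<noteq> 0" "p < n" for p
  proof -
    have "E 0 p"
      using deg_eq_n_minus_1_iff[OF n_pos(1)] assms(3) that by blast
    then show ?thesis
      by (rule edge_sym)
  qed
  have "\<Delta> = d 0"
  proof -
    obtain v where "v < n" and "\<Delta> = d v"
      using max_deg_attained by blast
    then have "\<Delta> \<le> d 0"
      using deg_le_n_minus_1 assms(3) by simp
    then show ?thesis
      using deg_le_max_deg[OF n_pos(1)] by simp
  qed
  have leaf_deg_ge: "d 1 \<le> d p" if "p < n" for p
    using d_leaf[rule_format, of p] assms(4) that by (cases "p = 0") simp_all
  have "N = d 0 / d 1"
  proof (rule antisym)
    obtain p j where "E p j" and "N = d j / d p"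
      using max_ratio_attained by blast
    moreover have "d j \<le> d 0" and "d 1 \<le> d p"
      using deg_le_max_deg \<open>\<Delta> = d 0\<close> leaf_deg_ge edge_in_range[OF \<open>E p j\<close>] by auto
    ultimately show "N \<le> d 0 / d 1"
      using frac_le[of "d 0" "d j" "d 1" "d p"] deg_pos[OF n_pos(2)] by simp
    show "d 0 / d 1 \<le> N"
      using ratio_le_max_ratio[OF centre_edge[of 1]] n_pos by simp
  qed
  show ?thesis
  proof (intro allI impI)
    fix p assume "p < n"
    have "(\<Delta> - d p) * y p = 0"
      using \<open>\<Delta> = d 0\<close> y_leaf[of p] by (cases "p = 0") simp_all
    moreover have "y j = 0" if "j \<in> non_neighbours p" for j
    proof (rule y_leaf, rule notI)
      assume "j = 0"
      then have "p \<noteq> 0" and "\<not> E p 0"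
        using that unfolding non_neighbours_def by auto
      then show False
        using centre_edge \<open>p < n\<close> by blast
    qed
    moreover have "(N - d j / d p) * y j = 0" if "j \<in> neighbours n E p" for j
    proof (cases "j = 0")
      case True
      have "p \<noteq> 0"
      proof
        assume "p = 0"
        then show False
          using that True no_loop[of 0] by (simp add: neighbours_iff)
      qed
      then show ?thesis
        using d_leaf[rule_format, of p] \<open>p < n\<close> \<open>N = d 0 / d 1\<close> True by simp
    qed (simp add: y_leaf)
    ultimately show "slack p = 0"
      unfolding slack_eq_0_iff[OF \<open>p < n\<close>] using e_zero[OF \<open>p < n\<close>] by blast
  qed
qed

theorem rho_Q_le_s_and_eq_iff_extremal:
  "rho_Q n E \<le> s \<and> (rho_Q n E = s \<longleftrightarrow> (\<forall>k<n. t k = t 0)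
     \<or> (1 \<le> i \<and> bidegreed n E \<and> t 1 < t 0 \<and> (\<forall>k. 1 \<le> k \<and> k < n \<longrightarrow> t k = t 1)
        \<and> d 0 = real n - 1 \<and> d 1 < d 0 \<and> (\<forall>k. 1 \<le> k \<and> k < n \<longrightarrow> d k = d 1)))"
proof -
  have "(\<forall>p<n. slack p = 0) \<longleftrightarrow> (\<forall>k<n. t k = t 0)
     \<or> (1 \<le> i \<and> bidegreed n E \<and> t 1 < t 0 \<and> (\<forall>k. 1 \<le> k \<and> k < n \<longrightarrow> t k = t 1)
        \<and> d 0 = real n - 1 \<and> d 1 < d 0 \<and> (\<forall>k. 1 \<le> k \<and> k < n \<longrightarrow> d k = d 1))"
  proof
    assume tight: "\<forall>p<n. slack p = 0"
    show "(\<forall>k<n. t k = t 0)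
     \<or> (1 \<le> i \<and> bidegreed n E \<and> t 1 < t 0 \<and> (\<forall>k. 1 \<le> k \<and> k < n \<longrightarrow> t k = t 1)
        \<and> d 0 = real n - 1 \<and> d 1 < d 0 \<and> (\<forall>k. 1 \<le> k \<and> k < n \<longrightarrow> d k = d 1))"
    proof (cases "y 0 = 0")
      case True
      then show ?thesis
        using tight_regular_case[OF tight True] by blast
    next
      case False
      then show ?thesis
        using tight_star_case[OF tight False] by blast
    qed
  next
    assume "(\<forall>k<n. t k = t 0)
     \<or> (1 \<le> i \<and> bidegreed n E \<and> t 1 < t 0 \<and> (\<forall>k. 1 \<le> k \<and> k < n \<longrightarrow> t k = t 1)
        \<and> d 0 = real n - 1 \<and> d 1 < d 0 \<and> (\<forall>k. 1 \<le> k \<and> k < n \<longrightarrow> d k = d 1))"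
    then show "\<forall>p<n. slack p = 0"
    proof
      assume "\<forall>k<n. t k = t 0"
      then show ?thesis
        by (rule regular_imp_tight)
    next
      assume "1 \<le> i \<and> bidegreed n E \<and> t 1 < t 0 \<and> (\<forall>k. 1 \<le> k \<and> k < n \<longrightarrow> t k = t 1)
        \<and> d 0 = real n - 1 \<and> d 1 < d 0 \<and> (\<forall>k. 1 \<le> k \<and> k < n \<longrightarrow> d k = d 1)"
      then show ?thesis
        using star_imp_tight by blast
    qed
  qed
  then show ?thesis
    using rho_Q_le_s_and_eq_iff by simp
qed

end

theorem corollary5:
  fixes n :: nat and E :: "nat \<Rightarrow> nat \<Rightarrow> bool" and i :: nat
  defines "d \<equiv> (\<lambda>k. real (deg n E k))"
      and "m \<equiv> avg_deg n E"
      and "\<Delta> \<equiv> real (max_deg n E)"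
      and "N \<equiv> max_ratio n E"
  assumes "n \<ge> 2"
      and "simple_graph n E"
      and "connected_graph n E"
      and order: "\<And>k l. k \<le> l \<Longrightarrow> l < n \<Longrightarrow> m l + d l \<le> m k + d k"
      and "i < n"
  shows "rho_Q n E \<le> (m i + d i + \<Delta> - N
            + sqrt ((m i + d i - \<Delta> + N)\<^sup>2 + 4 * N * (\<Sum>k<i. m k + d k - m i - d i))) / 2
    \<and> (rho_Q n E = (m i + d i + \<Delta> - N
            + sqrt ((m i + d i - \<Delta> + N)\<^sup>2 + 4 * N * (\<Sum>k<i. m k + d k - m i - d i))) / 2
         \<longleftrightarrow> (\<forall>k<n. m k + d k = m 0 + d 0)
           \<or> (i \<ge> 1 \<and> bidegreed n E \<and> m 0 + d 0 > m 1 + d 1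
              \<and> (\<forall>k. 1 \<le> k \<and> k < n \<longrightarrow> m k + d k = m 1 + d 1)
              \<and> d 0 = real n - 1 \<and> d 0 > d 1 \<and> (\<forall>k. 1 \<le> k \<and> k < n \<longrightarrow> d k = d 1)))"
proof -
  have graph: "ordered_connected_graph n E i"
    using assms unfolding d_def m_def
    by unfold_locales simp_all
  show ?thesis
    using ordered_connected_graph.rho_Q_le_s_and_eq_iff_extremal[OF graph]
    unfolding ordered_connected_graph.s_def[OF graph] ordered_connected_graph.S_def[OF graph]
      d_def m_def \<Delta>_def N_def .
qed

end
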